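(* Let $K$ be a field and let $f\colon\mathbb Z^k\to K$ be a hypergeometric term on $\mathbb Z^k$ that is weakly factorial on a polyhedral region $\mathcal R$. Then there exist finitely many polyhedral regions $\mathcal R_1,\dots,\mathcal R_m$ such that $\mathcal R=\mathcal R_1\cup\cdots\cup\mathcal R_m$ and $f$ is factorial on each $\mathcal R_i$.
   Context: A hypergeometric term on $\mathbb Z^k$ over $K$ is a function $f\colon\mathbb Z^k\to K$ such that for each $i$ there are nonzero polynomials $A_i,B_i\in K[\vec z]$ with $A_i(\vec z)f(\vec z)=B_i(\vec z)f(\vec z+\vec e_i)$ for all $\vec z\in\mathbb Z^k$. A half-space is $\{\vec z:\vec v\cdot\vec z>n\}$ ($\vec v\in\mathbb Z^k$, $n\in\mathbb Z$); a polyhedral region is $\mathbb Z^k$ or a finite intersection of half-spaces. Notation: $\mathop{\mathrm{gp}}_{j=a}^{b}g(j)=\prod_{j=a}^{b-1}g(j)$ if $b\ge a$ and $=\prod_{j=b}^{a-1}g(j)^{-1}$ if $b<a$. $f$ is weakly factorial on $\mathcal R$ if there exist a finite $V\subset\mathbb Z^k$, univariate $a_{\vec v},b_{\vec v}\in K[z]$ ($\vec v\in V$) and $\vec z_0\in\mathcal R$ such that for all $\vec z\in\mathcal R$: $f(\vec z)=\prod_{\vec v\in V}\mathop{\mathrm{gp}}_{j=\vec z_0\cdot\vec v}^{\vec z\cdot\vec v}a_{\vec v}(j)/b_{\vec v}(j)$, and all $a_{\vec v}(j),b_{\vec v}(j)$ occurring in these products are nonzero. $f$ is factorial on $\mathcal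 R$ if there exist a finite $V\subset\mathbb Z^k$ and, for $\vec v\in V$, univariate $a_{\vec v},b_{\vec v}\in K[z]$ and integers $n_{\vec v}$ such that for all $\vec z\in\mathcal R$: $f(\vec z)=\prod_{\vec v\in V}\prod_{j=1}^{\vec v\cdot\vec z+n_{\vec v}}a_{\vec v}(j)/b_{\vec v}(j)$; each $\vec v\cdot\vec z+n_{\vec v}$ is a positive integer; and $a_{\vec v}(j),b_{\vec v}(j)\ne0$ for $1\le j\le\vec v\cdot\vec z+n_{\vec v}$. *)

theory Defs
  imports "HOL-Analysis.Finite_Cartesian_Product" "HOL-Computational_Algebra.Polynomial"
begin

definition dotZ :: "int ^ 'k::finite \<Rightarrow> int ^ 'k \<Rightarrow> int" where
  "dotZ v z = (\<Sum>i\<in>UNIV. v $ i * z $ i)"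

definition unitZ :: "'k::finite \<Rightarrow> int ^ 'k" where
  "unitZ i = (\<chi> j. if j = i then 1 else 0)"

text \<open>A multivariate polynomial in K[z_1..z_k], given by a finite set M of exponent vectors
  and coefficients c; evaluated at an integer point.\<close>
definition mpoly_eval :: "('k::finite \<Rightarrow> nat) set \<Rightarrow> (('k \<Rightarrow> nat) \<Rightarrow> 'a::field) \<Rightarrow> int ^ 'k \<Rightarrow> 'a" where
  "mpoly_eval M c z = (\<Sum>m\<in>M. c m * (\<Prod>i\<in>UNIV. (of_int (z $ i)) ^ (m i)))"

definition mpoly_nonzero :: "('k::finite \<Rightarrow> nat) set \<Rightarrow> (('k \<Rightarrow> nat) \<Rightarrow> 'a::field) \<Rightarrow> bool" where
  "mpoly_nonzero M c \<longleftrightarrow> finite M \<and> (\<exists>m\<in>M. c m \<noteq> 0)"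

definition hypergeometric_term :: "(int ^ 'k::finite \<Rightarrow> 'a::field) \<Rightarrow> bool" where
  "hypergeometric_term f \<longleftrightarrow>
     (\<forall>i::'k. \<exists>MA cA MB cB. mpoly_nonzero MA cA \<and> mpoly_nonzero MB cB \<and>
        (\<forall>z. mpoly_eval MA cA z * f z = mpoly_eval MB cB z * f (z + unitZ i)))"

definition halfspace :: "int ^ 'k::finite \<Rightarrow> int \<Rightarrow> (int ^ 'k) set" where
  "halfspace v n = {z. dotZ v z > n}"

definition polyhedral_region :: "(int ^ 'k::finite) set \<Rightarrow> bool" where
  "polyhedral_region R \<longleftrightarrow> R = UNIV \<or>
     (\<exists>H. finite H \<and> H \<noteq> {} \<and> R = (\<Inter>(v, n)\<in>H. halfspace v n))"

definition gp :: "int \<Rightarrow> int \<Rightarrow> (int \<Rightarrow> 'a::field) \<Rightarrow> 'a" where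
  "gp a b g = (if a \<le> b then (\<Prod>j\<in>{a..<b}. g j) else (\<Prod>j\<in>{b..<a}. inverse (g j)))"

definition weakly_factorial_on :: "(int ^ 'k::finite \<Rightarrow> 'a::field) \<Rightarrow> (int ^ 'k) set \<Rightarrow> bool" where
  "weakly_factorial_on f R \<longleftrightarrow>
     (\<exists>V (a :: int ^ 'k \<Rightarrow> 'a poly) (b :: int ^ 'k \<Rightarrow> 'a poly) z0.
        finite V \<and> z0 \<in> R \<and>
        (\<forall>z\<in>R. f z = (\<Prod>v\<in>V. gp (dotZ z0 v) (dotZ z v)
                           (\<lambda>j. poly (a v) (of_int j) / poly (b v) (of_int j))) \<and>
                (\<forall>v\<in>V. \<forall>j\<in>{min (dotZ z0 v) (dotZ z v)..<max (dotZ z0 v) (dotZ z v)}.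
                    poly (a v) (of_int j) \<noteq> 0 \<and> poly (b v) (of_int j) \<noteq> 0)))"

definition factorial_on :: "(int ^ 'k::finite \<Rightarrow> 'a::field) \<Rightarrow> (int ^ 'k) set \<Rightarrow> bool" where
  "factorial_on f R \<longleftrightarrow>
     (\<exists>V (a :: int ^ 'k \<Rightarrow> 'a poly) (b :: int ^ 'k \<Rightarrow> 'a poly) (n :: int ^ 'k \<Rightarrow> int).
        finite V \<and>
        (\<forall>z\<in>R. f z = (\<Prod>v\<in>V. \<Prod>j\<in>{1..dotZ v z + n v}.
                            poly (a v) (of_int j) / poly (b v) (of_int j)) \<and>
                (\<forall>v\<in>V. dotZ v z + n v \<ge> 1 \<and>
                   (\<forall>j\<in>{1..dotZ v z + n v}.
                      poly (a v) (of_int j) \<noteq> 0 \<and> poly (b v) (of_int j) \<noteq> 0))))"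

end

theory Submission imports Defs begin

text \<open>Fix the base point \<open>z0\<close> of the weakly factorial representation and split \<open>R\<close> according
  to the signs of \<open>v \<cdot> z - v \<cdot> z0\<close>, \<open>v \<in> V\<close>. Each such sign region is cut out of \<open>R\<close> by finitely
  many half-spaces, and on it every factor \<open>gp (v \<cdot> z0) (v \<cdot> z)\<close> runs in a fixed direction: it is
  \<open>1\<close> if the sign is \<open>0\<close>, and otherwise a shifted (sign \<open>1\<close>) or reflected (sign \<open>-1\<close>) factorial
  in \<open>\<plusminus>v \<cdot> z - \<plusminus>v \<cdot> z0 \<ge> 1\<close>. Collecting the factors that share the vector \<open>\<plusminus>v\<close> gives
  a factorial representation.\<close>

lemma dotZ_commute: "dotZ v z = dotZ z v"
  unfolding dotZ_def by (simp add: mult.commute)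

lemma dotZ_uminus_right: "dotZ z (- v) = - dotZ z v"
  unfolding dotZ_def by (simp add: sum_negf)

lemma mem_halfspace_iff: "z \<in> halfspace v n \<longleftrightarrow> n < dotZ z v"
  by (simp add: halfspace_def dotZ_commute)

definition sign_region ::
    "(int ^ 'k::finite) set \<Rightarrow> int ^ 'k \<Rightarrow> (int ^ 'k) set \<Rightarrow> (int ^ 'k \<Rightarrow> int) \<Rightarrow> (int ^ 'k) set"
  where "sign_region R z0 V \<sigma> = {z \<in> R. \<forall>v\<in>V. sgn (dotZ z v - dotZ z0 v) = \<sigma> v}"

lemma sign_regions_cover:
  "R = (\<Union>\<sigma>\<in>PiE V (\<lambda>_. {-1, 0, 1}). sign_region R z0 V \<sigma>)"
proof (intro equalityI subsetI)
  fix z assume "z \<in> R"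
  then have "z \<in> sign_region R z0 V (restrict (\<lambda>v. sgn (dotZ z v - dotZ z0 v)) V)"
    by (simp add: sign_region_def)
  moreover have "restrict (\<lambda>v. sgn (dotZ z v - dotZ z0 v)) V \<in> PiE V (\<lambda>_. {-1, 0, 1})"
    by (auto simp: sgn_if)
  ultimately show "z \<in> (\<Union>\<sigma>\<in>PiE V (\<lambda>_. {-1, 0, 1}). sign_region R z0 V \<sigma>)"
    by blast
qed (auto simp: sign_region_def)

lemma sgn_level_set_eq_halfspaces:
  assumes "s \<in> {-1, 0, 1}"
  shows "\<exists>H. finite H \<and> {z. sgn (dotZ z v - c) = s} = (\<Inter>(u, n)\<in>H. halfspace u n)"
proof -
  have "s = 1 \<or> s = -1 \<or> s = 0"
    using assms by auto
  then show ?thesis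
  proof (elim disjE)
    assume "s = 1"
    then show ?thesis
      by (intro exI[of _ "{(v, c)}"]) (auto simp: mem_halfspace_iff sgn_if)
  next
    assume "s = -1"
    then show ?thesis
      by (intro exI[of _ "{(-v, -c)}"]) (auto simp: mem_halfspace_iff dotZ_uminus_right sgn_if)
  next
    assume "s = 0"
    then show ?thesis
      by (intro exI[of _ "{(v, c - 1), (-v, -c - 1)}"])
        (auto simp: mem_halfspace_iff dotZ_uminus_right sgn_if)
  qed
qed

lemma polyhedral_region_Int_halfspaces:
  assumes "polyhedral_region R" "finite H"
  shows "polyhedral_region (R \<inter> (\<Inter>(v, n)\<in>H. halfspace v n))"
proof -
  from assms(1) consider "R = UNIV" | G where "finite G" "G \<noteq> {}" "R = (\<Inter>(v, n)\<in>G. halfspace v n)"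
    unfolding polyhedral_region_def by blast
  then show ?thesis
  proof cases
    case 1
    with \<open>finite H\<close> show ?thesis
      unfolding polyhedral_region_def by (cases "H = {}") auto
  next
    case (2 G)
    with \<open>finite H\<close> show ?thesis
      unfolding polyhedral_region_def by (intro disjI2 exI[of _ "G \<union> H"]) auto
  qed
qed

lemma polyhedral_region_sign_region:
  assumes "polyhedral_region R" "finite V" "\<sigma> ` V \<subseteq> {-1, 0, 1}"
  shows "polyhedral_region (sign_region R z0 V \<sigma>)"
proof -
  have "\<forall>v\<in>V. \<exists>H. finite H \<and>
      {z. sgn (dotZ z v - dotZ z0 v) = \<sigma> v} = (\<Inter>(u, n)\<in>H. halfspace u n)"
    using assms(3) by (auto intro: sgn_level_set_eq_halfspaces)
  then obtain H where H: "\<forall>v\<in>V. finite (H v) \<and>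
      {z. sgn (dotZ z v - dotZ z0 v) = \<sigma> v} = (\<Inter>(u, n)\<in>H v. halfspace u n)"
    by (rule bchoice[elim_format]) blast
  have "sign_region R z0 V \<sigma> = R \<inter> (\<Inter>v\<in>V. {z. sgn (dotZ z v - dotZ z0 v) = \<sigma> v})"
    by (auto simp: sign_region_def)
  also have "\<dots> = R \<inter> (\<Inter>v\<in>V. \<Inter>(u, n)\<in>H v. halfspace u n)"
    using H by (intro arg_cong[where f = "(\<inter>) R"] INF_cong) simp_all
  also have "\<dots> = R \<inter> (\<Inter>(u, n)\<in>(\<Union>v\<in>V. H v). halfspace u n)"
    by blast
  finally show ?thesis
    using H \<open>finite V\<close> by (metis finite_UN_I polyhedral_region_Int_halfspaces[OF assms(1)])
qed

lemma prod_atLeastLessThan_int_shift: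
  "(\<Prod>j\<in>{c..<t}. g j) = (\<Prod>j\<in>{1..t - c}. g (j + c - 1))" for c t :: int
  by (rule prod.reindex_bij_witness[where i = "\<lambda>j. j + c - 1" and j = "\<lambda>j. j - c + 1"]) auto

lemma prod_atLeastLessThan_int_reflect:
  "(\<Prod>j\<in>{t..<c}. g j) = (\<Prod>j\<in>{1..c - t}. g (c - j))" for c t :: int
  by (rule prod.reindex_bij_witness[where i = "\<lambda>j. c - j" and j = "\<lambda>j. c - j"]) auto

lemma gp_eq_factorial:
  fixes a b :: "'a::field poly"
  assumes "sgn (t - c) = s" "s \<noteq> 0"
    and nonzero: "\<forall>j\<in>{min c t..<max c t}. poly a (of_int j) \<noteq> 0 \<and> poly b (of_int j) \<noteq> 0"
  defines "A \<equiv> if s = 1 then a \<circ>\<^sub>p [:of_int c - 1, 1:] else b \<circ>\<^sub>p [:of_int c, -1:]"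
    and "B \<equiv> if s = 1 then b \<circ>\<^sub>p [:of_int c - 1, 1:] else a \<circ>\<^sub>p [:of_int c, -1:]"
  shows "gp c t (\<lambda>j. poly a (of_int j) / poly b (of_int j)) =
      (\<Prod>j\<in>{1..\<bar>t - c\<bar>}. poly A (of_int j) / poly B (of_int j))"
    and "\<forall>j\<in>{1..\<bar>t - c\<bar>}. poly A (of_int j) \<noteq> 0 \<and> poly B (of_int j) \<noteq> 0"
proof -
  consider
    (ascending) "c < t" "\<And>j. poly A (of_int j) = poly a (of_int (j + c - 1)) \<and>
                            poly B (of_int j) = poly b (of_int (j + c - 1))"
  | (descending) "t < c" "\<And>j. poly A (of_int j) = poly b (of_int (c - j)) \<and>
                             poly B (of_int j) = poly a (of_int (c - j))"
    using assms(1,2) by (cases "c < t") (auto simp: A_def B_def sgn_if poly_pcompose algebra_simps split: if_splits)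
  note direction = this
  show "gp c t (\<lambda>j. poly a (of_int j) / poly b (of_int j)) =
      (\<Prod>j\<in>{1..\<bar>t - c\<bar>}. poly A (of_int j) / poly B (of_int j))"
    using direction
  proof cases
    case ascending
    then show ?thesis
      by (simp add: gp_def prod_atLeastLessThan_int_shift)
  next
    case descending
    then show ?thesis
      by (simp add: gp_def prod_atLeastLessThan_int_reflect)
  qed
  show "\<forall>j\<in>{1..\<bar>t - c\<bar>}. poly A (of_int j) \<noteq> 0 \<and> poly B (of_int j) \<noteq> 0"
  proof
    fix j assume j: "j \<in> {1..\<bar>t - c\<bar>}"
    from direction show "poly A (of_int j) \<noteq> 0 \<and> poly B (of_int j) \<noteq> 0"
    proof cases
      case ascending
      with j have "j + c - 1 \<in> {min c t..<max c t}"
        by auto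
      then show ?thesis
        using nonzero ascending(2)[of j] by metis
    next
      case descending
      with j have "c - j \<in> {min c t..<max c t}"
        by auto
      then show ?thesis
        using nonzero descending(2)[of j] by metis
    qed
  qed
qed

lemma factorial_on_prod_factorials:
  fixes f :: "int ^ 'k::finite \<Rightarrow> 'a::field" and w :: "'i \<Rightarrow> int ^ 'k" and A B :: "'i \<Rightarrow> 'a poly"
  assumes "finite V"
    and rep: "\<And>z. z \<in> S \<Longrightarrow> f z = (\<Prod>v\<in>V. \<Prod>j\<in>{1..dotZ (w v) z + n (w v)}.
                                   poly (A v) (of_int j) / poly (B v) (of_int j))"
    and pos: "\<And>z v. z \<in> S \<Longrightarrow> v \<in> V \<Longrightarrow> 1 \<le> dotZ (w v) z + n (w v)"
    and nonzero: "\<And>z v j. z \<in> S \<Longrightarrow> v \<in> V \<Longrightarrow> j \<in> {1..dotZ (w v) z + n (w v)} \<Longrightarrow>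
                   poly (A v) (of_int j) \<noteq> 0 \<and> poly (B v) (of_int j) \<noteq> 0"
  shows "factorial_on f S"
proof -
  define fibre where "fibre u = {v \<in> V. w v = u}" for u
  define a where "a u = (\<Prod>v\<in>fibre u. A v)" for u
  define b where "b u = (\<Prod>v\<in>fibre u. B v)" for u
  have fin_fibre: "finite (fibre u)" for u
    using \<open>finite V\<close> by (simp add: fibre_def)
  have "f z = (\<Prod>u\<in>w ` V. \<Prod>j\<in>{1..dotZ u z + n u}. poly (a u) (of_int j) / poly (b u) (of_int j))"
    if "z \<in> S" for z
  proof -
    have "f z = (\<Prod>u\<in>w ` V. \<Prod>v\<in>fibre u. \<Prod>j\<in>{1..dotZ (w v) z + n (w v)}.
                   poly (A v) (of_int j) / poly (B v) (of_int j))"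
      unfolding rep[OF that] fibre_def by (rule prod.image_gen[OF \<open>finite V\<close>])
    also have "\<dots> = (\<Prod>u\<in>w ` V. \<Prod>v\<in>fibre u. \<Prod>j\<in>{1..dotZ u z + n u}.
                   poly (A v) (of_int j) / poly (B v) (of_int j))"
      by (intro prod.cong refl) (simp add: fibre_def)
    also have "\<dots> = (\<Prod>u\<in>w ` V. \<Prod>j\<in>{1..dotZ u z + n u}. \<Prod>v\<in>fibre u.
                   poly (A v) (of_int j) / poly (B v) (of_int j))"
      by (intro prod.cong refl prod.swap)
    finally show ?thesis
      by (simp add: a_def b_def poly_prod prod_dividef)
  qed
  moreover have "1 \<le> dotZ u z + n u \<and>
      (\<forall>j\<in>{1..dotZ u z + n u}. poly (a u) (of_int j) \<noteq> 0 \<and> poly (b u) (of_int j) \<noteq> 0)"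
    if "z \<in> S" "u \<in> w ` V" for z u
    using that pos nonzero fin_fibre by (auto simp: a_def b_def fibre_def poly_prod)
  ultimately show ?thesis
    unfolding factorial_on_def using \<open>finite V\<close> by (intro exI[of _ "w ` V"] exI[of _ a] exI[of _ b] exI[of _ n]) auto
qed

lemma factorial_on_sign_region:
  fixes f :: "int ^ 'k::finite \<Rightarrow> 'a::field" and a b :: "int ^ 'k \<Rightarrow> 'a poly"
    and \<sigma> :: "int ^ 'k \<Rightarrow> int"
  assumes "finite V"
    and weak: "\<forall>z\<in>R. f z = (\<Prod>v\<in>V. gp (dotZ z0 v) (dotZ z v)
                               (\<lambda>j. poly (a v) (of_int j) / poly (b v) (of_int j))) \<and>
                  (\<forall>v\<in>V. \<forall>j\<in>{min (dotZ z0 v) (dotZ z v)..<max (dotZ z0 v) (dotZ z v)}.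
                      poly (a v) (of_int j) \<noteq> 0 \<and> poly (b v) (of_int j) \<noteq> 0)"
  defines "S \<equiv> sign_region R z0 V \<sigma>"
  shows "factorial_on f S"
proof -
  have in_R: "z \<in> R" and sign: "\<And>v. v \<in> V \<Longrightarrow> sgn (dotZ z v - dotZ z0 v) = \<sigma> v"
    if "z \<in> S" for z
    using that by (simp_all add: S_def sign_region_def)
  note rep = bspec[OF weak in_R, THEN conjunct1]
    and nonzero = bspec[OF weak in_R, THEN conjunct2]
  define V0 where "V0 = {v \<in> V. \<sigma> v \<noteq> 0}"
  define w where "w v = (if \<sigma> v = 1 then v else - v)" for v :: "int ^ 'k"
  define n where "n u = - dotZ z0 u" for u
  define A where "A v = (if \<sigma> v = 1 then a v \<circ>\<^sub>p [:of_int (dotZ z0 v) - 1, 1:]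
                       else b v \<circ>\<^sub>p [:of_int (dotZ z0 v), -1:])" for v
  define B where "B v = (if \<sigma> v = 1 then b v \<circ>\<^sub>p [:of_int (dotZ z0 v) - 1, 1:]
                       else a v \<circ>\<^sub>p [:of_int (dotZ z0 v), -1:])" for v
  have "finite V0"
    using \<open>finite V\<close> by (simp add: V0_def)
  have count: "dotZ (w v) z + n (w v) = \<bar>dotZ z v - dotZ z0 v\<bar>"
    and count_pos: "1 \<le> dotZ (w v) z + n (w v)"
    if "z \<in> S" "v \<in> V0" for z v
    using sign[of z v] that
    by (auto simp: V0_def w_def n_def dotZ_commute dotZ_uminus_right sgn_if split: if_splits)
  have factor: "gp (dotZ z0 v) (dotZ z v) (\<lambda>j. poly (a v) (of_int j) / poly (b v) (of_int j)) =
      (\<Prod>j\<in>{1..dotZ (w v) z + n (w v)}. poly (A v) (of_int j) / poly (B v) (of_int j))"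
      (is ?factor)
    and factor_nonzero:
      "\<forall>j\<in>{1..dotZ (w v) z + n (w v)}. poly (A v) (of_int j) \<noteq> 0 \<and> poly (B v) (of_int j) \<noteq> 0"
      (is ?factor_nonzero)
    if "z \<in> S" "v \<in> V0" for z v
  proof -
    have "v \<in> V" "\<sigma> v \<noteq> 0"
      using that(2) by (simp_all add: V0_def)
    from gp_eq_factorial[OF sign[OF that(1) \<open>v \<in> V\<close>] \<open>\<sigma> v \<noteq> 0\<close> bspec[OF nonzero[OF that(1)] \<open>v \<in> V\<close>]]
    show ?factor ?factor_nonzero
      by (simp_all add: count[OF that] A_def B_def)
  qed
  have "f z = (\<Prod>v\<in>V0. \<Prod>j\<in>{1..dotZ (w v) z + n (w v)}. poly (A v) (of_int j) / poly (B v) (of_int j))"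
    if "z \<in> S" for z
  proof -
    have "f z = (\<Prod>v\<in>V0. gp (dotZ z0 v) (dotZ z v) (\<lambda>j. poly (a v) (of_int j) / poly (b v) (of_int j)))"
    proof (unfold rep[OF that], intro prod.mono_neutral_right \<open>finite V\<close> ballI)
      fix v assume "v \<in> V - V0"
      with sign[OF that, of v] have "dotZ z v = dotZ z0 v"
        by (auto simp: V0_def sgn_if split: if_splits)
      then show "gp (dotZ z0 v) (dotZ z v) (\<lambda>j. poly (a v) (of_int j) / poly (b v) (of_int j)) = 1"
        by (simp add: gp_def)
    qed (auto simp: V0_def)
    then show ?thesis
      using factor[OF that] by simp
  qed
  then show ?thesis
    using count_pos factor_nonzero by (intro factorial_on_prod_factorials[OF \<open>finite V0\<close>]) auto
qed

theorem lemmaB25: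
  fixes f :: "int ^ 'k::finite \<Rightarrow> 'a::field" and R :: "(int ^ 'k) set"
  assumes "hypergeometric_term f"
    and "polyhedral_region R"
    and "weakly_factorial_on f R"
  shows "\<exists>Rs :: (int ^ 'k) set list.
           R = \<Union>(set Rs) \<and> (\<forall>Ri\<in>set Rs. polyhedral_region Ri \<and> factorial_on f Ri)"
proof -
  obtain V and a b :: "int ^ 'k \<Rightarrow> 'a poly" and z0 where "finite V"
    and weak: "\<forall>z\<in>R. f z = (\<Prod>v\<in>V. gp (dotZ z0 v) (dotZ z v)
                               (\<lambda>j. poly (a v) (of_int j) / poly (b v) (of_int j))) \<and>
                  (\<forall>v\<in>V. \<forall>j\<in>{min (dotZ z0 v) (dotZ z v)..<max (dotZ z0 v) (dotZ z v)}.
                      poly (a v) (of_int j) \<noteq> 0 \<and> poly (b v) (of_int j) \<noteq> 0)"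
    using assms(3) unfolding weakly_factorial_on_def by blast
  define signs where "signs = PiE V (\<lambda>_. {-1, 0, 1 :: int})"
  have "finite (sign_region R z0 V ` signs)"
    using \<open>finite V\<close> by (simp add: signs_def finite_PiE)
  then obtain Rs where Rs: "set Rs = sign_region R z0 V ` signs"
    using finite_list by metis
  have "polyhedral_region (sign_region R z0 V \<sigma>) \<and> factorial_on f (sign_region R z0 V \<sigma>)"
    if "\<sigma> \<in> signs" for \<sigma>
  proof
    have "\<sigma> ` V \<subseteq> {-1, 0, 1}"
      using that by (auto simp: signs_def PiE_def Pi_def)
    then show "polyhedral_region (sign_region R z0 V \<sigma>)"
      by (rule polyhedral_region_sign_region[OF assms(2) \<open>finite V\<close>])
    show "factorial_on f (sign_region R z0 V \<sigma>)"
      by (rule factorial_on_sign_region[OF \<open>finite V\<close> weak])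
  qed
  then have "\<forall>Ri\<in>set Rs. polyhedral_region Ri \<and> factorial_on f Ri"
    unfolding Rs by blast
  moreover have "R = \<Union>(set Rs)"
    unfolding Rs signs_def by (rule sign_regions_cover)
  ultimately show ?thesis
    by blast
qed

end
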